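(* Let $g:\mathbb{R}^n\to\mathbb{R}^n$ and $h:\mathbb{R}\to\mathbb{R}^n$ be smooth, and let $(\rho_\varepsilon)_{\varepsilon\in(0,1)}$ be a net of smooth functions $\rho_\varepsilon:\mathbb{R}\to\mathbb{R}$ such that $\operatorname{supp}(\rho_\varepsilon)\subseteq[-\varepsilon,\varepsilon]$ for all $\varepsilon\in(0,1)$, and such that there exist $\eta>0$ and $C\ge 0$ with $\int|\rho_\varepsilon(x)|\,dx\le C$ for all $\varepsilon\in(0,\eta)$. For $x_0,\dot x_0\in\mathbb{R}^n$ and $\varepsilon\in(0,\eta)$ consider the initial value problem $$\ddot x_\varepsilon(t)=g(x_\varepsilon(t))\rho_\varepsilon(t)+h(t),\qquad x_\varepsilon(-1)=x_0,\qquad \dot x_\varepsilon(-1)=\dot x_0.$$ Let $b>0$, $M=\int_{-1}^1\int_{-1}^s|h(r)|\,dr\,ds$, $I=\{x\in\mathbb{R}^n: |x-x_0|\le b+|\dot x_0|+M\}$, let $L$ be a Lipschitz constant for $g$ on $I$, and set $$\alpha=\min\Big\{\frac{b}{C\|g\|_{L^\infty(I)}+|\dot x_0|},\ \frac{1}{2LC},\ 1\Big\}.$$ Then the initial value problem has a unique solution on $J_\varepsilon=[-1,\alpha-\varepsilon]$. Consequently, for $\varepsilon$ sufficiently small, $x_\varepsilon$ is defined on all of $\mathbb{R}$, and both $x_\varepsilon$ and $\dot x_\varepsilon$ are bounded on compact subsets of $\mathbb{R}$, uniformly in $\varepsilon$. *)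

theory Defs
  imports "HOL-Analysis.Analysis"
begin

text \<open>Smoothness (C-infinity): there is a family of functions containing f, consisting of
  continuous functions, and closed under taking partial derivatives in every coordinate
  direction, i.e. all partial derivatives of all orders exist and are continuous.\<close>
definition smooth_fun :: "('a::euclidean_space \<Rightarrow> 'b::real_normed_vector) \<Rightarrow> bool" where
  "smooth_fun f \<longleftrightarrow> (\<exists>S. f \<in> S \<and>
     (\<forall>\<phi>\<in>S. continuous_on UNIV \<phi> \<and>
        (\<forall>i\<in>Basis. \<exists>\<psi>\<in>S. \<forall>x. ((\<lambda>t. \<phi> (x + t *\<^sub>R i)) has_vector_derivative \<psi> x) (at 0))))"

text \<open>(x, v) solves  x'' = g(x) r(t) + h(t), x(-1) = x0, x'(-1) = x1  on the interval J
  (v is the velocity x'; one-sided derivatives at endpoints of J).\<close>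
definition ivp_sol ::
  "('n::euclidean_space \<Rightarrow> 'n) \<Rightarrow> (real \<Rightarrow> real) \<Rightarrow> (real \<Rightarrow> 'n) \<Rightarrow> 'n \<Rightarrow> 'n
    \<Rightarrow> real set \<Rightarrow> (real \<Rightarrow> 'n) \<Rightarrow> (real \<Rightarrow> 'n) \<Rightarrow> bool" where
  "ivp_sol g r h x0 x1 J x v \<longleftrightarrow> x (-1) = x0 \<and> v (-1) = x1 \<and>
     (\<forall>t\<in>J. (x has_vector_derivative v t) (at t within J) \<and>
            (v has_vector_derivative (r t *\<^sub>R g (x t) + h t)) (at t within J))"

text \<open>alpha = min{ b/(C G + |x1|), 1/(2 L C), 1 }, a quotient with zero denominator read as +infinity.\<close>
definition alpha_const :: "real \<Rightarrow> real \<Rightarrow> real \<Rightarrow> real \<Rightarrow> real \<Rightarrow> real" where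
  "alpha_const b C G v L =
     min 1 (min (if C * G + v > 0 then b / (C * G + v) else 1)
                (if L * C > 0 then 1 / (2 * L * C) else 1))"

end

theory Submission
  imports Defs
begin

text \<open>
  The problem is the fixed-point equation \<open>x = P x\<close> for the operator
  \<open>P x t = x\<^sub>0 + (t + 1) x\<^sub>1 + \<integral>\<^bsub>-1\<^esub>\<^bsup>t\<^esup> \<integral>\<^bsub>-1\<^esub>\<^bsup>s\<^esup> (\<rho>\<^sub>\<epsilon> g(x) + h)\<close>
  (\<open>picard\<close> below), where \<open>x\<^sub>1\<close> is the initial velocity.
  Since \<open>\<rho>\<^sub>\<epsilon>\<close> vanishes before \<open>-\<epsilon>\<close> and has mass at most \<open>C\<close>, the pulse
  contributes at most \<open>(t + \<epsilon>) C sup |g(x)|\<close> to \<open>P x t\<close>. Up to time \<open>\<alpha> - \<epsilon>\<close> this makes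
  \<open>P\<close> a contraction with factor \<open>\<alpha> C L \<le> 1/2\<close>, and, because \<open>\<alpha> (C G + |x\<^sub>1|) \<le> b\<close>,
  it keeps every solution inside the ball \<open>I\<close> on which \<open>g\<close> is bounded by \<open>G\<close> and
  \<open>L\<close>-Lipschitz. Banach's fixed-point theorem, applied after extending \<open>g\<close> from \<open>I\<close>
  by the nearest-point projection, gives existence and uniqueness on \<open>[-1, \<alpha> - \<epsilon>]\<close>.
  Once \<open>\<epsilon> < \<alpha>/2\<close> the pulse is over before \<open>\<alpha> - \<epsilon>\<close>, so outside \<open>[-1, \<alpha> - \<epsilon>]\<close>
  the equation is \<open>x'' = h\<close>; this continues the solution uniquely to all of \<open>\<real>\<close>, with
  bounds on compact sets that depend only on \<open>|x\<^sub>0|\<close>, \<open>|x\<^sub>1|\<close>, \<open>C G\<close> and \<open>h\<close>.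
\<close>

lemma smooth_fun_imp_continuous: "smooth_fun f \<Longrightarrow> continuous_on UNIV f"
  unfolding smooth_fun_def by blast

lemma continuous_zero_outside_interior_support:
  fixes f :: "'a::topological_space \<Rightarrow> 'b::{t2_space,zero}"
  assumes "continuous_on UNIV f" and "closure {x. f x \<noteq> 0} \<subseteq> S" and "x \<notin> interior S"
  shows "f x = 0"
proof -
  have "{x. f x \<noteq> 0} \<subseteq> interior S"
  proof (rule interior_maximal)
    show "{x. f x \<noteq> 0} \<subseteq> S" using assms(2) closure_subset by (rule order_trans[rotated])
    show "open {x. f x \<noteq> 0}" using assms(1) continuous_on_const by (rule open_Collect_neq)
  qed
  then show ?thesis using assms(3) by auto
qed

lemma continuous_on_stays_in_closed:
  fixes y :: "real \<Rightarrow> 'a::topological_space"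
  assumes cont: "continuous_on {a..b} y" and "closed B" and "y a \<in> B"
    and interior: "\<And>t. t \<in> {a..<b} \<Longrightarrow> y ` {a..t} \<subseteq> B \<Longrightarrow> y t \<in> interior B"
  shows "y ` {a..b} \<subseteq> B"
proof (rule ccontr)
  define E where "E = {t \<in> {a..b}. y t \<notin> B}"
  define s where "s = Inf E"
  assume "\<not> ?thesis"
  then obtain e where e: "e \<in> E" unfolding E_def by blast
  have bdd: "bdd_below E" unfolding E_def by (auto intro: bdd_belowI[of _ a])
  have s_le: "s \<le> t" if "t \<in> E" for t unfolding s_def using cInf_lower[OF that bdd] .
  have s: "a \<le> s" "s \<le> b"
    using e s_le[OF e] unfolding s_def E_def by (auto intro: cInf_greatest)
  have before: "y ` {a..s} \<subseteq> B"
  proof (cases "a = s")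
    case True
    then show ?thesis using \<open>y a \<in> B\<close> by auto
  next
    case False
    have "y ` closure {a..<s} \<subseteq> B"
    proof (rule image_closure_subset)
      show "continuous_on (closure {a..<s}) y"
        using False s by (auto intro: continuous_on_subset[OF cont])
      show "y ` {a..<s} \<subseteq> B" using s_le s unfolding E_def by fastforce
    qed fact
    then show ?thesis using False s by simp
  qed
  have "s \<notin> E" using before s unfolding E_def by auto
  then have "s < b" using e s_le[OF e] s unfolding E_def by (cases "e = s") auto
  then have "y s \<in> interior B" using interior before s by auto
  then obtain A where A: "open A" "s \<in> A" and AB: "\<And>t. t \<in> {a..b} \<Longrightarrow> t \<in> A \<Longrightarrow> y t \<in> interior B"
    using cont s unfolding continuous_on_topological by (metis atLeastAtMost_iff open_interior)
  obtain d where d: "d > 0" "ball s d \<subseteq> A" using A openE by blast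
  have "s + d \<le> t" if "t \<in> E" for t
  proof (rule ccontr)
    assume "\<not> s + d \<le> t"
    then have "t \<in> A" using d s_le[OF that] by (auto simp: dist_real_def)
    then show False using AB that interior_subset unfolding E_def by blast
  qed
  then have "s + d \<le> s" unfolding s_def using e by (intro cInf_greatest) auto
  then show False using d by simp
qed

lemma norm_le_Sup_norm_image:
  assumes "continuous_on S g" and "compact S" and "y \<in> S"
  shows "norm (g y) \<le> Sup ((\<lambda>y. norm (g y)) ` S)"
  using assms
  by (intro cSUP_upper bounded_imp_bdd_above compact_imp_bounded compact_continuous_image continuous_intros)

lemma lipschitz_on_closest_point_extension:
  fixes S :: "'a::euclidean_space set"
  assumes "L-lipschitz_on S g" and "convex S" "closed S" "S \<noteq> {}"
  shows "L-lipschitz_on UNIV (\<lambda>y. g (closest_point S y))"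
proof -
  have "1-lipschitz_on UNIV (closest_point S)"
    using closest_point_lipschitz[OF assms(2-4)] by (intro lipschitz_onI) auto
  moreover have "L-lipschitz_on (closest_point S ` UNIV) g"
    by (rule lipschitz_on_subset[OF assms(1)]) (use closest_point_in_set[OF assms(3,4)] in auto)
  ultimately show ?thesis using lipschitz_on_compose2 by fastforce
qed

lemma apply_bcontfun_Bcontfun_clamp:
  fixes f :: "real \<Rightarrow> 'a::metric_space"
  assumes "continuous_on {a..b} f"
  shows "apply_bcontfun (Bcontfun (\<lambda>t. f (clamp a b t))) = (\<lambda>t. f (clamp a b t))"
proof -
  obtain v :: "real \<Rightarrow>\<^sub>C 'a" where "\<And>t. v t = f (clamp a b t)"
    using continuous_on_cbox_bcontfunE[of a b f] assms by (metis cbox_interval)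
  then have "(\<lambda>t. f (clamp a b t)) = apply_bcontfun v" by auto
  then show ?thesis by (simp add: apply_bcontfun_inverse)
qed

lemma integrable_on_subinterval_continuous:
  fixes k :: "real \<Rightarrow> 'a::banach"
  shows "continuous_on {a..b} k \<Longrightarrow> {c..d} \<subseteq> {a..b} \<Longrightarrow> k integrable_on {c..d}"
  by (rule integrable_on_subinterval[OF integrable_continuous_real])

lemma continuous_on_indefinite_integral:
  fixes k :: "real \<Rightarrow> 'a::banach"
  shows "continuous_on {a..b} k \<Longrightarrow> continuous_on {a..b} (\<lambda>s. integral {a..s} k)"
  by (intro indefinite_integral_continuous_1 integrable_continuous_real)

definition oriented_integral :: "real \<Rightarrow> (real \<Rightarrow> 'a::banach) \<Rightarrow> real \<Rightarrow> 'a" where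
  "oriented_integral a k t = (if a \<le> t then integral {a..t} k else - integral {t..a} k)"

lemma has_vector_derivative_oriented_integral:
  fixes k :: "real \<Rightarrow> 'a::banach"
  assumes "continuous_on UNIV k"
  shows "(oriented_integral a k has_vector_derivative k t) (at t)"
proof -
  define c where "c = min a t - 1"
  define d where "d = max a t + 1"
  have k_int: "k integrable_on {u..v}" for u v
    using assms by (blast intro: integrable_continuous_real continuous_on_subset)
  have t: "t \<in> {c<..<d}" unfolding c_def d_def by auto
  have "((\<lambda>u. integral {c..u} k - integral {c..a} k) has_vector_derivative k t) (at t within {c..d})"
    using t by (auto intro!: derivative_eq_intros integral_has_vector_derivative
        intro: continuous_on_subset[OF assms])
  then have deriv: "((\<lambda>u. integral {c..u} k - integral {c..a} k) has_vector_derivative k t) (at t)"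
    using t by (simp add: at_within_Icc_at)
  have eq: "integral {c..u} k - integral {c..a} k = oriented_integral a k u" if "u \<in> {c<..<d}" for u
  proof (cases "a \<le> u")
    case True
    have "integral {c..a} k + integral {a..u} k = integral {c..u} k"
      using True by (intro Henstock_Kurzweil_Integration.integral_combine k_int) (simp_all add: c_def)
    then show ?thesis using True by (simp add: oriented_integral_def algebra_simps)
  next
    case False
    have "integral {c..u} k + integral {u..a} k = integral {c..a} k"
      using False that by (intro Henstock_Kurzweil_Integration.integral_combine k_int) simp_all
    then show ?thesis using False by (simp add: oriented_integral_def algebra_simps)
  qed
  show ?thesis
    by (rule has_vector_derivative_transform_within_open[OF deriv open_greaterThanLessThan t eq])
qed

lemma norm_diff_le_integral_of_vector_derivative:
  fixes F :: "real \<Rightarrow> 'a::banach"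
  assumes "\<And>q. q \<in> {min a b..max a b} \<Longrightarrow> (F has_vector_derivative F' q) (at q)"
    and "m integrable_on {min a b..max a b}"
    and "\<And>q. q \<in> {min a b..max a b} \<Longrightarrow> norm (F' q) \<le> m q"
  shows "norm (F b - F a) \<le> integral {min a b..max a b} m"
proof -
  have "(F' has_integral (F (max a b) - F (min a b))) {min a b..max a b}"
    using assms(1) by (intro fundamental_theorem_of_calculus) (auto intro: has_vector_derivative_at_within)
  then have "norm (F (max a b) - F (min a b)) \<le> integral {min a b..max a b} m"
    using assms(2,3) by (metis integral_norm_bound_integral integral_unique has_integral_integrable)
  then show ?thesis by (cases "a \<le> b") (simp_all add: max_def min_def norm_minus_commute)
qed

lemma norm_diff_le_of_vector_derivative_bound:
  fixes F :: "real \<Rightarrow> 'a::banach"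
  assumes "\<And>q. q \<in> {min a b..max a b} \<Longrightarrow> (F has_vector_derivative F' q) (at q)"
    and "\<And>q. q \<in> {min a b..max a b} \<Longrightarrow> norm (F' q) \<le> B"
  shows "norm (F b - F a) \<le> B * \<bar>b - a\<bar>"
proof -
  have "norm (F b - F a) \<le> integral {min a b..max a b} (\<lambda>_. B)"
    by (rule norm_diff_le_integral_of_vector_derivative) (use assms in auto)
  also have "\<dots> = B * \<bar>b - a\<bar>" by (cases "a \<le> b") (simp_all add: mult.commute)
  finally show ?thesis .
qed

lemma same_vector_derivative_imp_eq:
  assumes "convex S" and "a \<in> S" and "f a = g a" and "t \<in> S"
    and "\<And>t. t \<in> S \<Longrightarrow> (f has_vector_derivative f' t) (at t)"
    and "\<And>t. t \<in> S \<Longrightarrow> (g has_vector_derivative f' t) (at t)"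
  shows "f t = g t"
proof -
  have "((\<lambda>t. f t - g t) has_vector_derivative 0) (at t within S)" if "t \<in> S" for t
    using has_vector_derivative_diff[OF assms(5,6)[OF that]] by (simp add: has_vector_derivative_at_within)
  then obtain c where "\<And>t. t \<in> S \<Longrightarrow> f t - g t = c"
    using has_vector_derivative_zero_constant[OF \<open>convex S\<close>] by blast
  then show ?thesis using assms(2,3,4) by (metis eq_iff_diff_eq_0)
qed

section \<open>Double integrals\<close>

definition double_integral :: "(real \<Rightarrow> 'a::banach) \<Rightarrow> real \<Rightarrow> 'a" where
  "double_integral k t = integral {-1..t} (\<lambda>s. integral {-1..s} k)"

lemma continuous_on_double_integral:
  fixes k :: "real \<Rightarrow> 'a::banach"
  shows "continuous_on {-1..T} k \<Longrightarrow> continuous_on {-1..T} (double_integral k)"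
  unfolding double_integral_def
  by (intro continuous_on_indefinite_integral)

lemma double_integral_cong:
  "(\<And>q. q \<in> {-1..t} \<Longrightarrow> k q = l q) \<Longrightarrow> double_integral k t = double_integral l t"
  unfolding double_integral_def by (intro integral_cong) auto

lemma integral_eq_double_integral:
  fixes k w :: "real \<Rightarrow> 'a::banach"
  assumes "-1 \<le> t" and "w integrable_on {-1..t}"
    and "\<And>s. s \<in> {-1..t} \<Longrightarrow> w s = c + integral {-1..s} k"
  shows "integral {-1..t} w = (t + 1) *\<^sub>R c + double_integral k t"
proof -
  have "(\<lambda>s. w s - c) integrable_on {-1..t}" using assms(2) by (intro integrable_diff) auto
  then have "(\<lambda>s. integral {-1..s} k) integrable_on {-1..t}"
    by (rule integrable_eq) (simp add: assms(3))
  then have "integral {-1..t} (\<lambda>s. c + integral {-1..s} k) = (t + 1) *\<^sub>R c + double_integral k t"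
    using assms(1) by (simp add: integral_add[OF integrable_const_ivl] double_integral_def)
  moreover have "integral {-1..t} w = integral {-1..t} (\<lambda>s. c + integral {-1..s} k)"
    using assms(3) by (rule integral_cong)
  ultimately show ?thesis by simp
qed

lemma double_integral_add:
  fixes k l :: "real \<Rightarrow> 'a::banach"
  assumes "continuous_on {-1..t} k" and "continuous_on {-1..t} l"
  shows "double_integral (\<lambda>q. k q + l q) t = double_integral k t + double_integral l t"
proof -
  have "double_integral (\<lambda>q. k q + l q) t
      = integral {-1..t} (\<lambda>s. integral {-1..s} k + integral {-1..s} l)"
    unfolding double_integral_def
  proof (rule integral_cong)
    fix s assume "s \<in> {-1..t}"
    then show "integral {-1..s} (\<lambda>q. k q + l q) = integral {-1..s} k + integral {-1..s} l"
      using assms by (intro integral_add integrable_on_subinterval_continuous[of "-1" t]) auto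
  qed
  also have "\<dots> = double_integral k t + double_integral l t"
    unfolding double_integral_def using assms
    by (intro integral_add integrable_continuous_real continuous_on_indefinite_integral)
  finally show ?thesis .
qed

lemma double_integral_diff:
  fixes k l :: "real \<Rightarrow> 'a::banach"
  assumes "continuous_on {-1..t} k" and "continuous_on {-1..t} l"
  shows "double_integral (\<lambda>q. k q - l q) t = double_integral k t - double_integral l t"
  using double_integral_add[of t k "\<lambda>q. - l q"] assms
  by (simp add: double_integral_def continuous_on_minus integral_neg)

lemma norm_double_integral_le:
  fixes k :: "real \<Rightarrow> 'a::banach"
  assumes "continuous_on {-1..t} k" and "continuous_on {-1..t} m"
    and "\<And>q. q \<in> {-1..t} \<Longrightarrow> norm (k q) \<le> m q"
  shows "norm (double_integral k t) \<le> double_integral m t"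
  unfolding double_integral_def
proof (rule integral_norm_bound_integral)
  show "(\<lambda>s. integral {-1..s} k) integrable_on {-1..t}" "(\<lambda>s. integral {-1..s} m) integrable_on {-1..t}"
    using assms(1,2) by (auto intro: integrable_continuous_real continuous_on_indefinite_integral)
  fix s assume "s \<in> {-1..t}"
  then show "norm (integral {-1..s} k) \<le> integral {-1..s} m"
    using assms
    by (intro integral_norm_bound_integral integrable_on_subinterval_continuous[of "-1" t]) auto
qed

lemma double_integral_subset_le:
  fixes m :: "real \<Rightarrow> real"
  assumes "continuous_on {-1..t'} m" and "\<And>q. q \<in> {-1..t'} \<Longrightarrow> 0 \<le> m q" and "t \<le> t'"
  shows "double_integral m t \<le> double_integral m t'"
  unfolding double_integral_def
proof (rule integral_subset_le)
  have "continuous_on {-1..t'} (\<lambda>s. integral {-1..s} m)"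
    using assms(1) by (rule continuous_on_indefinite_integral)
  then show "(\<lambda>s. integral {-1..s} m) integrable_on {-1..t}" "(\<lambda>s. integral {-1..s} m) integrable_on {-1..t'}"
    using assms(3) by (auto intro: integrable_on_subinterval_continuous integrable_continuous_real)
  show "\<forall>s\<in>{-1..t'}. 0 \<le> integral {-1..s} m"
    using assms(1,2) by (auto intro!: integral_nonneg integrable_on_subinterval_continuous[of "-1" t'])
qed (use assms(3) in auto)

section \<open>The Picard operator\<close>

definition picard ::
  "(real \<Rightarrow> real) \<Rightarrow> ('a \<Rightarrow> 'a::banach) \<Rightarrow> (real \<Rightarrow> 'a) \<Rightarrow> 'a \<Rightarrow> 'a \<Rightarrow> (real \<Rightarrow> 'a) \<Rightarrow> real \<Rightarrow> 'a"
  where "picard r f h x0 x1 z t = x0 + (t + 1) *\<^sub>R x1 + double_integral (\<lambda>q. r q *\<^sub>R f (z q) + h q) t"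

lemma continuous_on_forcing:
  fixes f :: "'a::topological_space \<Rightarrow> 'b::real_normed_vector"
  assumes "continuous_on UNIV r" "continuous_on UNIV f" "continuous_on UNIV h" "continuous_on S z"
  shows "continuous_on S (\<lambda>q. r q *\<^sub>R f (z q) + h q)"
  using assms by (intro continuous_intros continuous_on_compose2[OF assms(2,4)])
    (auto intro: continuous_on_subset)

lemma continuous_on_picard:
  assumes "continuous_on UNIV r" "continuous_on UNIV f" "continuous_on UNIV h" "continuous_on {-1..T} z"
  shows "continuous_on {-1..T} (picard r f h x0 x1 z)"
  unfolding picard_def
  by (intro continuous_intros continuous_on_double_integral continuous_on_forcing assms)

lemma picard_cong:
  assumes "\<And>q. q \<in> {-1..t} \<Longrightarrow> f (z q) = g (z q)"
  shows "picard r f h x0 x1 z t = picard r g h x0 x1 z t"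
proof -
  have "double_integral (\<lambda>q. r q *\<^sub>R f (z q) + h q) t = double_integral (\<lambda>q. r q *\<^sub>R g (z q) + h q) t"
    by (rule double_integral_cong) (simp add: assms)
  then show ?thesis by (simp add: picard_def)
qed

lemma picard_initial: "picard r f h x0 x1 z (-1) = x0"
  by (simp add: picard_def double_integral_def)

lemma ivp_sol_continuous:
  assumes "ivp_sol g r h x0 x1 J y w"
  shows "continuous_on J y"
  using assms unfolding ivp_sol_def continuous_on_eq_continuous_within
  by (auto intro: has_vector_derivative_continuous)

lemma ivp_sol_subset: "ivp_sol g r h x0 x1 UNIV y w \<Longrightarrow> ivp_sol g r h x0 x1 J y w"
  unfolding ivp_sol_def by (auto intro: has_vector_derivative_at_within)

lemma ivp_sol_integral_equations:
  assumes sol: "ivp_sol g r h x0 x1 {-1..T} y w" and "t \<in> {-1..T}"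
  shows "w t = x1 + integral {-1..t} (\<lambda>q. r q *\<^sub>R g (y q) + h q)"
    and "y t = picard r g h x0 x1 y t"
proof -
  have sub: "{-1..t} \<subseteq> {-1..T}" using \<open>t \<in> {-1..T}\<close> by auto
  have y': "(y has_vector_derivative w s) (at s within {-1..t})"
    and w': "(w has_vector_derivative r s *\<^sub>R g (y s) + h s) (at s within {-1..t})"
    if "s \<in> {-1..t}" for s
    using sol that sub unfolding ivp_sol_def by (auto intro: has_vector_derivative_within_subset[OF _ sub])
  have w_eq: "w s = x1 + integral {-1..s} (\<lambda>q. r q *\<^sub>R g (y q) + h q)" if "s \<in> {-1..t}" for s
  proof -
    have "((\<lambda>q. r q *\<^sub>R g (y q) + h q) has_integral (w s - w (-1))) {-1..s}"
      using that by (intro fundamental_theorem_of_calculus) (auto intro: has_vector_derivative_within_subset[OF w'])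
    then show ?thesis using sol unfolding ivp_sol_def by (simp add: integral_unique)
  qed
  then show "w t = x1 + integral {-1..t} (\<lambda>q. r q *\<^sub>R g (y q) + h q)"
    using \<open>t \<in> {-1..T}\<close> by simp
  have "(w has_integral (y t - y (-1))) {-1..t}"
    using \<open>t \<in> {-1..T}\<close> y' by (intro fundamental_theorem_of_calculus) auto
  then have "y t = x0 + integral {-1..t} w"
    using sol unfolding ivp_sol_def by (simp add: integral_unique)
  also have "integral {-1..t} w = (t + 1) *\<^sub>R x1 + double_integral (\<lambda>q. r q *\<^sub>R g (y q) + h q) t"
    using \<open>t \<in> {-1..T}\<close> \<open>(w has_integral _) _\<close> w_eq
    by (intro integral_eq_double_integral) (auto intro: has_integral_integrable)
  finally show "y t = picard r g h x0 x1 y t" by (simp add: picard_def add.assoc)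
qed

text \<open>
  Beyond \<open>{-1..T}\<close> the constructed solution is driven by the endpoint values of \<open>z\<close>, so
  the equation is only guaranteed where the pulse \<open>r\<close> vanishes.
\<close>

lemma picard_fixpoint_imp_solution:
  fixes g :: "'a::banach \<Rightarrow> 'a"
  assumes r: "continuous_on UNIV r" and g: "continuous_on UNIV g" and h: "continuous_on UNIV h"
    and z: "continuous_on {-1..T} z" and "-1 \<le> T"
    and fixpoint: "\<And>t. t \<in> {-1..T} \<Longrightarrow> z t = picard r g h x0 x1 z t"
  obtains X V where "X (-1) = x0" and "V (-1) = x1" and "\<And>t. (X has_vector_derivative V t) (at t)"
    and "\<And>t. t \<in> {-1..T} \<or> r t = 0 \<Longrightarrow> (V has_vector_derivative r t *\<^sub>R g (X t) + h t) (at t)"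
proof -
  have clamp_id: "clamp (-1) T t = t" if "t \<in> {-1..T}" for t
    using that by (simp add: cbox_interval)
  define k where "k t = r t *\<^sub>R g (z (clamp (-1) T t)) + h t" for t
  have "continuous (at t) (\<lambda>t. z (clamp (-1) T t))" for t
    using z by (intro clamp_continuous_at) (simp add: cbox_interval)
  then have "continuous_on UNIV (\<lambda>t. z (clamp (-1) T t))" by (simp add: continuous_at_imp_continuous_on)
  then have k_cont: "continuous_on UNIV k"
    unfolding k_def by (rule continuous_on_forcing[OF r g h])
  define V where "V t = x1 + oriented_integral (-1) k t" for t
  define X where "X t = x0 + oriented_integral (-1) V t" for t
  have V': "(V has_vector_derivative k t) (at t)" for t
    unfolding V_def by (rule has_vector_derivative_add[OF has_vector_derivative_const
        has_vector_derivative_oriented_integral[OF k_cont], simplified])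
  then have V_cont: "continuous_on UNIV V"
    by (meson continuous_at_imp_continuous_on has_vector_derivative_continuous)
  have X': "(X has_vector_derivative V t) (at t)" for t
    unfolding X_def by (rule has_vector_derivative_add[OF has_vector_derivative_const
        has_vector_derivative_oriented_integral[OF V_cont], simplified])
  have X_eq: "X t = z t" if t: "t \<in> {-1..T}" for t
  proof -
    have "X t = x0 + integral {-1..t} V" using t by (simp add: X_def oriented_integral_def)
    also have "integral {-1..t} V = (t + 1) *\<^sub>R x1 + double_integral k t"
    proof (rule integral_eq_double_integral)
      show "V integrable_on {-1..t}"
        by (rule integrable_continuous_real, rule continuous_on_subset[OF V_cont]) simp
    qed (use t in \<open>simp_all add: V_def oriented_integral_def\<close>)
    also have "double_integral k t = double_integral (\<lambda>q. r q *\<^sub>R g (z q) + h q) t"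
      using t by (intro double_integral_cong) (simp add: k_def clamp_id)
    finally show ?thesis using fixpoint[OF t] by (simp add: picard_def add.assoc)
  qed
  show ?thesis
  proof
    show "X (-1) = x0" "V (-1) = x1" by (simp_all add: X_def V_def oriented_integral_def)
    show "(X has_vector_derivative V t) (at t)" for t by (rule X')
    fix t assume "t \<in> {-1..T} \<or> r t = 0"
    then have "k t = r t *\<^sub>R g (X t) + h t" by (auto simp: k_def X_eq clamp_id)
    then show "(V has_vector_derivative r t *\<^sub>R g (X t) + h t) (at t)" using V'[of t] by simp
  qed
qed

section \<open>Pulses\<close>

locale pulse =
  fixes r :: "real \<Rightarrow> real" and \<epsilon> C :: real
  assumes continuous: "continuous_on UNIV r"
    and vanishes: "\<And>t. t \<notin> {-\<epsilon><..<\<epsilon>} \<Longrightarrow> r t = 0"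
    and mass_le: "\<And>a b. integral {a..b} (\<lambda>t. \<bar>r t\<bar>) \<le> C"
    and width: "0 < \<epsilon>" "\<epsilon> \<le> 1"

begin

lemma mass_nonneg: "0 \<le> C"
  using mass_le[of 0 0] by simp

text \<open>The inner integral vanishes up to time \<open>-\<epsilon>\<close> and is bounded by \<open>C K\<close> afterwards.\<close>

lemma norm_double_integral_le_mass:
  fixes \<phi> :: "real \<Rightarrow> 'a::banach"
  assumes "continuous_on {-1..t} \<phi>" and "-1 \<le> t" and "0 \<le> K"
    and \<phi>_le: "\<And>q. q \<in> {-1..t} \<Longrightarrow> norm (\<phi> q) \<le> K * \<bar>r q\<bar>"
  shows "norm (double_integral \<phi> t) \<le> max 0 (t + \<epsilon>) * (C * K)"
proof -
  define \<psi> where "\<psi> s = integral {-1..s} \<phi>" for s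
  define c where "c = min t (-\<epsilon>)"
  have c: "-1 \<le> c" "c \<le> t" "t - c = max 0 (t + \<epsilon>)"
    using assms(2) width unfolding c_def by auto
  have \<psi>_cont: "continuous_on {-1..t} \<psi>"
    unfolding \<psi>_def using assms(1) by (rule continuous_on_indefinite_integral)
  have \<phi>_int: "\<phi> integrable_on {-1..s}" if "s \<le> t" for s
    using assms(1) that by (intro integrable_on_subinterval_continuous[of "-1" t]) auto
  have \<psi>_le: "norm (\<psi> s) \<le> C * K" if "s \<in> {-1..t}" for s
  proof -
    have "norm (\<psi> s) \<le> integral {-1..s} (\<lambda>q. K * \<bar>r q\<bar>)"
      unfolding \<psi>_def using that continuous
      by (intro integral_norm_bound_integral \<phi>_int integrable_continuous_real continuous_intros \<phi>_le)
        (auto intro: continuous_on_subset)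
    also have "\<dots> \<le> K * C"
      using mass_le \<open>0 \<le> K\<close> by (simp add: mult_left_mono)
    finally show ?thesis by (simp add: mult.commute)
  qed
  have \<psi>_zero: "\<psi> s = 0" if "s \<in> {-1..c}" for s
  proof -
    have "\<phi> q = 0" if "q \<in> {-1..s}" for q
      using \<phi>_le[of q] vanishes[of q] that \<open>s \<in> {-1..c}\<close> c unfolding c_def by auto
    then have "integral {-1..s} \<phi> = integral {-1..s} (\<lambda>_. 0::'a)" by (intro integral_cong) auto
    then show ?thesis unfolding \<psi>_def by simp
  qed
  have "double_integral \<phi> t = integral {-1..c} \<psi> + integral {c..t} \<psi>"
    unfolding double_integral_def \<psi>_def[symmetric] using c \<psi>_cont
    by (intro Henstock_Kurzweil_Integration.integral_combine[symmetric] integrable_continuous_real) auto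
  also have "\<dots> = integral {c..t} \<psi>"
    using integral_cong[of "{-1..c}" \<psi> "\<lambda>_. 0"] \<psi>_zero by simp
  finally have "norm (double_integral \<phi> t) = norm (integral {c..t} \<psi>)" by simp
  also have "\<dots> \<le> integral {c..t} (\<lambda>_. C * K)"
    using c \<psi>_cont \<psi>_le
    by (intro integral_norm_bound_integral integrable_on_subinterval_continuous[of "-1" t]) auto
  also have "\<dots> = max 0 (t + \<epsilon>) * (C * K)"
    using c by simp
  finally show ?thesis .
qed

lemma norm_picard_diff_le:
  assumes "continuous_on UNIV f" "continuous_on UNIV h"
    and "continuous_on {-1..t} z" "continuous_on {-1..t} w" and "-1 \<le> t" and "0 \<le> B"
    and "\<And>q. q \<in> {-1..t} \<Longrightarrow> norm (f (z q) - f (w q)) \<le> B"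
  shows "norm (picard r f h x0 x1 z t - picard r f h x0 x1 w t) \<le> max 0 (t + \<epsilon>) * (C * B)"
proof -
  have "picard r f h x0 x1 z t - picard r f h x0 x1 w t
      = double_integral (\<lambda>q. r q *\<^sub>R (f (z q) - f (w q))) t"
    unfolding picard_def
    using double_integral_diff[OF continuous_on_forcing[OF continuous assms(1,2,3)]
        continuous_on_forcing[OF continuous assms(1,2,4)]]
    by (simp add: algebra_simps)
  also have "norm \<dots> \<le> max 0 (t + \<epsilon>) * (C * B)"
  proof (rule norm_double_integral_le_mass[OF _ assms(5,6)])
    show "continuous_on {-1..t} (\<lambda>q. r q *\<^sub>R (f (z q) - f (w q)))"
      using continuous assms(1,3,4)
      by (intro continuous_intros continuous_on_compose2[OF assms(1)]) (auto intro: continuous_on_subset)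
    show "norm (r q *\<^sub>R (f (z q) - f (w q))) \<le> B * \<bar>r q\<bar>" if "q \<in> {-1..t}" for q
      using mult_left_mono[OF assms(7)[OF that] abs_ge_zero[of "r q"]] by (simp add: mult.commute)
  qed
  finally show ?thesis .
qed

lemma norm_picard_minus_initial_le:
  assumes "continuous_on UNIV f" "continuous_on UNIV h" "continuous_on {-1..t} z"
    and "-1 \<le> t" "t \<le> 1" and "0 \<le> G" and f_le: "\<And>q. q \<in> {-1..t} \<Longrightarrow> norm (f (z q)) \<le> G"
  shows "norm (picard r f h x0 x1 z t - x0)
    \<le> norm x1 * (t + 1) + double_integral (\<lambda>q. norm (h q)) 1 + max 0 (t + \<epsilon>) * (C * G)"
proof -
  have rfz: "continuous_on {-1..t} (\<lambda>q. r q *\<^sub>R f (z q))"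
    using continuous assms(1,3)
    by (intro continuous_intros continuous_on_compose2[OF assms(1)]) (auto intro: continuous_on_subset)
  have h: "continuous_on S h" "continuous_on S (\<lambda>q. norm (h q))" for S
    using assms(2) by (auto intro: continuous_on_subset continuous_on_norm)
  have "picard r f h x0 x1 z t - x0
      = (t + 1) *\<^sub>R x1 + double_integral (\<lambda>q. r q *\<^sub>R f (z q)) t + double_integral h t"
    unfolding picard_def using double_integral_add[OF rfz h(1)] by simp
  also have "norm \<dots> \<le> norm x1 * (t + 1) + max 0 (t + \<epsilon>) * (C * G) + double_integral (\<lambda>q. norm (h q)) 1"
  proof (intro norm_triangle_le add_mono)
    show "norm ((t + 1) *\<^sub>R x1) \<le> norm x1 * (t + 1)" using assms(4) by simp
    show "norm (double_integral (\<lambda>q. r q *\<^sub>R f (z q)) t) \<le> max 0 (t + \<epsilon>) * (C * G)"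
      using rfz assms(4,6)
    proof (rule norm_double_integral_le_mass)
      show "norm (r q *\<^sub>R f (z q)) \<le> G * \<bar>r q\<bar>" if "q \<in> {-1..t}" for q
        using mult_left_mono[OF f_le[OF that] abs_ge_zero[of "r q"]] by (simp add: mult.commute)
    qed
    have "norm (double_integral h t) \<le> double_integral (\<lambda>q. norm (h q)) t"
      by (rule norm_double_integral_le[OF h]) simp
    also have "\<dots> \<le> double_integral (\<lambda>q. norm (h q)) 1"
      by (rule double_integral_subset_le[OF h(2) _ assms(5)]) simp
    finally show "norm (double_integral h t) \<le> double_integral (\<lambda>q. norm (h q)) 1" .
  qed
  finally show ?thesis by simp
qed

lemma picard_fixpoint_unique:
  assumes "continuous_on UNIV f" "continuous_on UNIV h"
    and z: "continuous_on {-1..T} z" "\<And>t. t \<in> {-1..T} \<Longrightarrow> z t = picard r f h x0 x1 z t"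
    and w: "continuous_on {-1..T} w" "\<And>t. t \<in> {-1..T} \<Longrightarrow> w t = picard r f h x0 x1 w t"
    and lip: "\<And>q. q \<in> {-1..T} \<Longrightarrow> norm (f (z q) - f (w q)) \<le> L * norm (z q - w q)"
    and "0 \<le> L" and small: "max 0 (T + \<epsilon>) * (C * L) < 1"
    and "t \<in> {-1..T}"
  shows "z t = w t"
proof -
  have cont: "continuous_on {-1..T} (\<lambda>t. norm (z t - w t))"
    using z(1) w(1) by (intro continuous_intros)
  have ne: "{-1..T} \<noteq> {}" using \<open>t \<in> {-1..T}\<close> by auto
  obtain t0 where t0: "t0 \<in> {-1..T}"
    and max: "\<And>t. t \<in> {-1..T} \<Longrightarrow> norm (z t - w t) \<le> norm (z t0 - w t0)"
    using continuous_attains_sup[OF compact_Icc ne cont] by blast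
  define D where "D = norm (z t0 - w t0)"
  have LD: "0 \<le> L * D" using \<open>0 \<le> L\<close> unfolding D_def by simp
  have "D \<le> max 0 (T + \<epsilon>) * (C * L) * D"
  proof -
    have "D = norm (picard r f h x0 x1 z t0 - picard r f h x0 x1 w t0)"
      using z(2)[OF t0] w(2)[OF t0] unfolding D_def by simp
    also have "\<dots> \<le> max 0 (t0 + \<epsilon>) * (C * (L * D))"
    proof (rule norm_picard_diff_le[OF assms(1,2) _ _ _ LD])
      show "continuous_on {-1..t0} z" "continuous_on {-1..t0} w"
        using z(1) w(1) t0 by (auto intro: continuous_on_subset)
      show "norm (f (z q) - f (w q)) \<le> L * D" if "q \<in> {-1..t0}" for q
        using order_trans[OF lip mult_left_mono[OF max \<open>0 \<le> L\<close>]] that t0 unfolding D_def by auto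
    qed (use t0 in auto)
    also have "\<dots> \<le> max 0 (T + \<epsilon>) * (C * (L * D))"
      using t0 LD mass_nonneg by (intro mult_right_mono) auto
    finally show ?thesis by (simp add: algebra_simps)
  qed
  then have "D * (1 - max 0 (T + \<epsilon>) * (C * L)) \<le> 0" by (simp add: algebra_simps)
  then have "D = 0" using small unfolding D_def by (simp add: mult_le_0_iff)
  then show ?thesis using max[OF \<open>t \<in> {-1..T}\<close>] unfolding D_def by simp
qed

lemma picard_has_fixpoint:
  fixes f :: "'a::banach \<Rightarrow> 'a"
  assumes f_lip: "L-lipschitz_on UNIV f" and h: "continuous_on UNIV h" and "-1 \<le> T"
    and small: "max 0 (T + \<epsilon>) * (C * L) < 1"
  obtains z where "continuous_on UNIV z" and "\<And>t. t \<in> {-1..T} \<Longrightarrow> z t = picard r f h x0 x1 z t"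
proof -
  have clamp_in: "clamp (-1) T t \<in> {-1..T}" for t
    using clamp_in_interval[of "-1" T t] \<open>-1 \<le> T\<close> by (simp add: cbox_interval)
  have f: "continuous_on UNIV f" using f_lip by (rule lipschitz_on_continuous_on)
  have L: "0 \<le> L" using f_lip by (rule lipschitz_on_nonneg)
  define P where "P u = Bcontfun (\<lambda>t. picard r f h x0 x1 (apply_bcontfun u) (clamp (-1) T t))"
    for u :: "real \<Rightarrow>\<^sub>C 'a"
  have P_apply: "apply_bcontfun (P u) t = picard r f h x0 x1 (apply_bcontfun u) (clamp (-1) T t)" for u t
    unfolding P_def
    using apply_bcontfun_Bcontfun_clamp[OF continuous_on_picard[OF continuous f h continuous_on_apply_bcontfun]]
    by simp
  have contr: "dist (P u) (P v) \<le> max 0 (T + \<epsilon>) * (C * L) * dist u v" for u v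
  proof (rule dist_bound)
    fix t
    have "norm (picard r f h x0 x1 u (clamp (-1) T t) - picard r f h x0 x1 v (clamp (-1) T t))
        \<le> max 0 (clamp (-1) T t + \<epsilon>) * (C * (L * dist u v))"
    proof (rule norm_picard_diff_le[OF f h])
      show "norm (f (u q) - f (v q)) \<le> L * dist u v" for q
        using lipschitz_onD[OF f_lip, of "u q" "v q"] mult_left_mono[OF dist_bounded[of u q v] L]
        by (simp add: dist_norm)
    qed (use clamp_in L in auto)
    then have "dist (P u t) (P v t) \<le> max 0 (clamp (-1) T t + \<epsilon>) * (C * (L * dist u v))"
      by (simp add: P_apply dist_norm)
    also have "\<dots> \<le> max 0 (T + \<epsilon>) * (C * (L * dist u v))"
      using clamp_in[of t] mass_nonneg L by (intro mult_right_mono) auto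
    finally show "dist (P u t) (P v t) \<le> max 0 (T + \<epsilon>) * (C * L) * dist u v"
      by (simp add: mult.assoc)
  qed
  have "\<exists>!z. P z = z"
    using mass_nonneg L contr by (intro banach_fix_type[OF _ small]) auto
  then obtain z where z: "P z = z" by blast
  have "z t = picard r f h x0 x1 z t" if "t \<in> {-1..T}" for t
    using P_apply[of z t] z that by (simp add: cbox_interval)
  then show ?thesis using that[of "apply_bcontfun z"] by simp
qed

lemma picard_fixpoint_in_cball:
  assumes f: "continuous_on UNIV f" and h: "continuous_on UNIV h"
    and z: "continuous_on {-1..T} z" and "-1 \<le> T" "T \<le> 1" and "0 \<le> R"
    and f_le: "\<And>y. y \<in> cball x0 R \<Longrightarrow> norm (f y) \<le> G"
    and a_priori: "\<And>t. t \<in> {-1..<T} \<Longrightarrow>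
      norm x1 * (t + 1) + double_integral (\<lambda>q. norm (h q)) 1 + max 0 (t + \<epsilon>) * (C * G) < R"
    and fixpoint: "\<And>t. t \<in> {-1..T} \<Longrightarrow> z t = picard r f h x0 x1 z t"
  shows "z ` {-1..T} \<subseteq> cball x0 R"
proof (rule continuous_on_stays_in_closed[OF z closed_cball])
  show "z (-1) \<in> cball x0 R" using fixpoint[of "-1"] \<open>-1 \<le> T\<close> \<open>0 \<le> R\<close> by (simp add: picard_initial)
  fix t assume t: "t \<in> {-1..<T}" and "z ` {-1..t} \<subseteq> cball x0 R"
  then have "norm (f (z q)) \<le> G" if "q \<in> {-1..t}" for q
    using that by (intro f_le) blast
  then have "norm (picard r f h x0 x1 z t - x0)
      \<le> norm x1 * (t + 1) + double_integral (\<lambda>q. norm (h q)) 1 + max 0 (t + \<epsilon>) * (C * G)"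
    using t z \<open>T \<le> 1\<close> f_le[of x0] \<open>0 \<le> R\<close>
    by (intro norm_picard_minus_initial_le[OF f h]) (auto intro: continuous_on_subset order_trans[OF norm_ge_zero])
  then have "norm (z t - x0) < R" using a_priori[OF t] fixpoint[of t] t by simp
  then have "z t \<in> ball x0 R" by (simp add: dist_norm norm_minus_commute)
  then show "z t \<in> interior (cball x0 R)" using interior_maximal[OF ball_subset_cball open_ball] by blast
qed

end

lemma pulse_if_supported:
  assumes "smooth_fun \<rho>" and supp: "closure {t. \<rho> t \<noteq> 0} \<subseteq> {-\<epsilon>..\<epsilon>}" and "0 < \<epsilon>" "\<epsilon> \<le> 1"
    and mass: "integral UNIV (\<lambda>t. \<bar>\<rho> t\<bar>) \<le> C"
  shows "pulse \<rho> \<epsilon> C"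
proof
  show cont: "continuous_on UNIV \<rho>" using \<open>smooth_fun \<rho>\<close> by (rule smooth_fun_imp_continuous)
  show vanishes: "\<rho> t = 0" if "t \<notin> {-\<epsilon><..<\<epsilon>}" for t
    using continuous_zero_outside_interior_support[OF cont supp] that by simp
  have abs_cont: "continuous_on S (\<lambda>t. \<bar>\<rho> t\<bar>)" for S
    using cont by (intro continuous_intros) (auto intro: continuous_on_subset)
  have "(\<lambda>t. \<bar>\<rho> t\<bar>) integrable_on UNIV"
    by (rule integrable_on_superset[of _ "{-\<epsilon>..\<epsilon>}"]) (auto intro: integrable_continuous_real abs_cont vanishes)
  then have "integral {a..b} (\<lambda>t. \<bar>\<rho> t\<bar>) \<le> integral UNIV (\<lambda>t. \<bar>\<rho> t\<bar>)" for a b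
    by (intro integral_subset_le integrable_continuous_real abs_cont) auto
  then show "integral {a..b} (\<lambda>t. \<bar>\<rho> t\<bar>) \<le> C" for a b
    using mass order_trans by blast
qed (use assms in auto)

section \<open>The initial value problem driven by a pulse\<close>

locale pulse_ivp = pulse r \<epsilon> C for r \<epsilon> C +
  fixes g :: "'a::euclidean_space \<Rightarrow> 'a" and h :: "real \<Rightarrow> 'a" and x0 x1 :: 'a and R G L T :: real
  assumes g_continuous: "continuous_on UNIV g" and h_continuous: "continuous_on UNIV h"
    and g_lipschitz: "L-lipschitz_on (cball x0 R) g"
    and g_bounded: "\<And>y. y \<in> cball x0 R \<Longrightarrow> norm (g y) \<le> G"
    and horizon: "0 < T + \<epsilon>" "T \<le> 1"
    and contraction: "(T + \<epsilon>) * (C * L) < 1"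
    and a_priori: "\<And>t. t \<in> {-1..<T} \<Longrightarrow>
      norm x1 * (t + 1) + double_integral (\<lambda>q. norm (h q)) 1 + max 0 (t + \<epsilon>) * (C * G) < R"
begin

lemma horizon_gt_minus_one: "-1 < T"
  using horizon(1) width(2) by simp

lemma radius_pos: "0 < R"
proof -
  have "double_integral (\<lambda>q. norm (h q)) (-1) \<le> double_integral (\<lambda>q. norm (h q)) 1"
    using h_continuous by (intro double_integral_subset_le) (auto intro: continuous_on_norm continuous_on_subset)
  then show ?thesis
    using a_priori[of "-1"] horizon_gt_minus_one width(2) by (simp add: double_integral_def)
qed

lemma bound_nonneg: "0 \<le> G"
  using g_bounded[of x0] radius_pos by (auto intro: order_trans[OF norm_ge_zero])

lemma contraction_max: "max 0 (T + \<epsilon>) * (C * L) < 1"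
  using horizon(1) contraction by simp

lemma ivp_sol_in_cball:
  assumes "ivp_sol g r h x0 x1 {-1..T} y w" and "t \<in> {-1..T}"
  shows "y t \<in> cball x0 R"
proof -
  have "y ` {-1..T} \<subseteq> cball x0 R"
    using picard_fixpoint_in_cball[OF g_continuous h_continuous ivp_sol_continuous[OF assms(1)]
        _ horizon(2) _ g_bounded a_priori ivp_sol_integral_equations(2)[OF assms(1)]]
      horizon_gt_minus_one radius_pos by simp
  then show ?thesis using assms(2) by blast
qed

lemma ivp_sol_unique:
  assumes y: "ivp_sol g r h x0 x1 {-1..T} y w" and y': "ivp_sol g r h x0 x1 {-1..T} y' w'"
    and "t \<in> {-1..T}"
  shows "y t = y' t \<and> w t = w' t"
proof -
  have y_eq: "y s = y' s" if "s \<in> {-1..T}" for s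
  proof (rule picard_fixpoint_unique[OF g_continuous h_continuous _ _ _ _ _ _ contraction_max that])
    show "continuous_on {-1..T} y" "continuous_on {-1..T} y'"
      using y y' by (auto dest: ivp_sol_continuous)
    show "y s = picard r g h x0 x1 y s" "y' s = picard r g h x0 x1 y' s" if "s \<in> {-1..T}" for s
      using y y' that by (auto dest: ivp_sol_integral_equations(2))
    show "norm (g (y q) - g (y' q)) \<le> L * norm (y q - y' q)" if "q \<in> {-1..T}" for q
      using lipschitz_onD[OF g_lipschitz ivp_sol_in_cball[OF y that] ivp_sol_in_cball[OF y' that]]
      by (simp add: dist_norm)
    show "0 \<le> L" using g_lipschitz by (rule lipschitz_on_nonneg)
  qed
  have "integral {-1..t} (\<lambda>q. r q *\<^sub>R g (y q) + h q) = integral {-1..t} (\<lambda>q. r q *\<^sub>R g (y' q) + h q)"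
    by (rule integral_cong) (use y_eq \<open>t \<in> _\<close> in auto)
  then have "w t = w' t"
    using ivp_sol_integral_equations(1)[OF y \<open>t \<in> _\<close>] ivp_sol_integral_equations(1)[OF y' \<open>t \<in> _\<close>] by simp
  then show ?thesis using y_eq \<open>t \<in> _\<close> by simp
qed

text \<open>
  The fixed point is found for the extension of \<open>g\<close> by nearest-point projection onto the
  ball; the a priori bound keeps it inside the ball, where the extension is \<open>g\<close> itself.
\<close>

lemma solution_exists:
  obtains X V where "X (-1) = x0" and "V (-1) = x1" and "\<And>t. (X has_vector_derivative V t) (at t)"
    and "\<And>t. t \<in> {-1..T} \<or> r t = 0 \<Longrightarrow> (V has_vector_derivative r t *\<^sub>R g (X t) + h t) (at t)"
proof -
  define f where "f y = g (closest_point (cball x0 R) y)" for y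
  have cball: "convex (cball x0 R)" "closed (cball x0 R)" "cball x0 R \<noteq> {}"
    using radius_pos by auto
  have f_lip: "L-lipschitz_on UNIV f"
    unfolding f_def using g_lipschitz cball by (rule lipschitz_on_closest_point_extension)
  have f_cont: "continuous_on UNIV f" using f_lip by (rule lipschitz_on_continuous_on)
  have f_le: "norm (f y) \<le> G" for y
    unfolding f_def using g_bounded closest_point_in_set[OF cball(2,3)] by blast
  obtain z where z: "continuous_on UNIV z" and z_fix: "\<And>t. t \<in> {-1..T} \<Longrightarrow> z t = picard r f h x0 x1 z t"
    using picard_has_fixpoint[OF f_lip h_continuous _ contraction_max] horizon_gt_minus_one by auto
  have z_cball: "z ` {-1..T} \<subseteq> cball x0 R"
    using horizon_gt_minus_one radius_pos z
    by (intro picard_fixpoint_in_cball[OF f_cont h_continuous _ _ horizon(2) _ f_le a_priori z_fix])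
      (auto intro: continuous_on_subset)
  have g_fix: "z t = picard r g h x0 x1 z t" if "t \<in> {-1..T}" for t
  proof -
    have "f (z q) = g (z q)" if "q \<in> {-1..t}" for q
    proof -
      have "q \<in> {-1..T}" using that \<open>t \<in> {-1..T}\<close> by auto
      then have "z q \<in> cball x0 R" using z_cball by blast
      then show ?thesis unfolding f_def by (simp add: closest_point_self)
    qed
    then show ?thesis using z_fix[OF that] picard_cong[of t f z g] by simp
  qed
  have z_J: "continuous_on {-1..T} z" using z by (rule continuous_on_subset) simp
  show ?thesis
    by (rule picard_fixpoint_imp_solution[OF continuous g_continuous h_continuous z_J _ g_fix])
      (use horizon_gt_minus_one that in auto)
qed

lemma ivp_sol_exists: "\<exists>x v. ivp_sol g r h x0 x1 {-1..T} x v"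
proof (rule solution_exists)
  fix X V assume "X (-1) = x0" "V (-1) = x1" "\<And>t. (X has_vector_derivative V t) (at t)"
    and "\<And>t. t \<in> {-1..T} \<or> r t = 0 \<Longrightarrow> (V has_vector_derivative r t *\<^sub>R g (X t) + h t) (at t)"
  then have "ivp_sol g r h x0 x1 {-1..T} X V"
    unfolding ivp_sol_def by (auto intro: has_vector_derivative_at_within)
  then show ?thesis by blast
qed

context
  assumes wide: "\<epsilon> < T"
begin

lemma vanishes_outside_horizon: "t \<notin> {-1<..<T} \<Longrightarrow> r t = 0"
  using vanishes[of t] width(2) wide by auto

lemma ivp_sol_UNIV_exists: "\<exists>x v. ivp_sol g r h x0 x1 UNIV x v"
proof (rule solution_exists)
  fix X V assume "X (-1) = x0" "V (-1) = x1" "\<And>t. (X has_vector_derivative V t) (at t)"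
    and V': "\<And>t. t \<in> {-1..T} \<or> r t = 0 \<Longrightarrow> (V has_vector_derivative r t *\<^sub>R g (X t) + h t) (at t)"
  moreover have "(V has_vector_derivative r t *\<^sub>R g (X t) + h t) (at t)" for t
    using V' vanishes_outside_horizon[of t] by fastforce
  ultimately have "ivp_sol g r h x0 x1 UNIV X V" unfolding ivp_sol_def by simp
  then show ?thesis by blast
qed

lemma ivp_sol_UNIV_unique:
  assumes y: "ivp_sol g r h x0 x1 UNIV y w" and y': "ivp_sol g r h x0 x1 UNIV y' w'"
  shows "y = y' \<and> w = w'"
proof -
  have D: "\<And>t. (y has_vector_derivative w t) (at t)" "\<And>t. (y' has_vector_derivative w' t) (at t)"
    and DD: "\<And>t. (w has_vector_derivative r t *\<^sub>R g (y t) + h t) (at t)"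
      "\<And>t. (w' has_vector_derivative r t *\<^sub>R g (y' t) + h t) (at t)"
    using y y' unfolding ivp_sol_def by auto
  have on_J: "y t = y' t \<and> w t = w' t" if "t \<in> {-1..T}" for t
    using ivp_sol_unique[OF ivp_sol_subset[OF y] ivp_sol_subset[OF y'] that] .
  \<comment> \<open>off \<open>{-1..T}\<close> the pulse vanishes, so both solve \<open>x'' = h\<close>\<close>
  have off_J: "y t = y' t \<and> w t = w' t"
    if S: "convex S" "a \<in> S" "a \<in> {-1..T}" "t \<in> S" and S_off: "S \<inter> {-1<..<T} = {}" for S a t
  proof -
    have r0: "r s = 0" if "s \<in> S" for s using S_off that vanishes_outside_horizon by blast
    have w_eq: "w s = w' s" if "s \<in> S" for s
    proof (rule same_vector_derivative_imp_eq[OF S(1,2) _ that DD(1)])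
      show "(w' has_vector_derivative r s *\<^sub>R g (y s) + h s) (at s)" if "s \<in> S" for s
        using DD(2)[of s] r0[OF that] by simp
    qed (use on_J[OF S(3)] in simp)
    have "y t = y' t"
    proof (rule same_vector_derivative_imp_eq[OF S(1,2) _ S(4) D(1)])
      show "(y' has_vector_derivative w s) (at s)" if "s \<in> S" for s
        using D(2)[of s] w_eq[OF that] by simp
    qed (use on_J[OF S(3)] in simp)
    then show ?thesis using w_eq[OF S(4)] by simp
  qed
  have "y t = y' t \<and> w t = w' t" for t
  proof (cases "t \<le> -1 \<or> T \<le> t")
    case True
    then show ?thesis
      using off_J[of "{..-1}" "-1" t] off_J[of "{T..}" T t] horizon_gt_minus_one by fastforce
  qed (use on_J in auto)
  then show ?thesis by auto
qed


lemma ivp_sol_UNIV_forcing_le: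
  assumes "ivp_sol g r h x0 x1 UNIV y w"
  shows "norm (r t *\<^sub>R g (y t)) \<le> G * \<bar>r t\<bar>"
proof (cases "t \<in> {-1..T}")
  case True
  then show ?thesis
    using mult_left_mono[OF g_bounded[OF ivp_sol_in_cball[OF ivp_sol_subset[OF assms] True]] abs_ge_zero]
    by (simp add: mult.commute)
qed (use vanishes_outside_horizon in auto)

lemma ivp_sol_UNIV_velocity_le:
  assumes sol: "ivp_sol g r h x0 x1 UNIV y w"
    and h_le: "\<And>q. q \<in> {min (-1) t..max (-1) t} \<Longrightarrow> norm (h q) \<le> H"
  shows "norm (w t - x1) \<le> C * G + H * \<bar>t + 1\<bar>"
proof -
  define I where "I = {min (-1) t..max (-1) t}"
  have r_int: "(\<lambda>q. \<bar>r q\<bar>) integrable_on I"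
    unfolding I_def using continuous
    by (intro integrable_continuous_real continuous_intros) (auto intro: continuous_on_subset)
  have "norm (w t - w (-1)) \<le> integral I (\<lambda>q. G * \<bar>r q\<bar> + H)"
    unfolding I_def
  proof (rule norm_diff_le_integral_of_vector_derivative)
    show "(w has_vector_derivative r q *\<^sub>R g (y q) + h q) (at q)" for q
      using sol unfolding ivp_sol_def by simp
    show "(\<lambda>q. G * \<bar>r q\<bar> + H) integrable_on {min (-1) t..max (-1) t}"
      using r_int unfolding I_def by (intro integrable_add integrable_on_mult_right) auto
    show "norm (r q *\<^sub>R g (y q) + h q) \<le> G * \<bar>r q\<bar> + H" if "q \<in> {min (-1) t..max (-1) t}" for q
      using ivp_sol_UNIV_forcing_le[OF sol, of q] h_le[OF that] norm_triangle_le by (metis add_mono)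
  qed
  also have "\<dots> = G * integral I (\<lambda>q. \<bar>r q\<bar>) + H * \<bar>t + 1\<bar>"
    using r_int unfolding I_def
    by (subst integral_add) (auto intro: integrable_on_mult_right simp: mult.commute abs_if min_def max_def)
  also have "\<dots> \<le> C * G + H * \<bar>t + 1\<bar>"
    using mult_left_mono[OF mass_le bound_nonneg] unfolding I_def by (simp add: mult.commute)
  finally show ?thesis using sol unfolding ivp_sol_def by simp
qed

lemma ivp_sol_UNIV_bounded:
  assumes sol: "ivp_sol g r h x0 x1 UNIV y w" and "1 \<le> A"
    and h_le: "\<And>t. t \<in> {-A..A} \<Longrightarrow> norm (h t) \<le> H" and t: "t \<in> {-A..A}"
  shows "norm (w t) \<le> norm x1 + C * G + 2 * A * H"
    and "norm (y t) \<le> norm x0 + 2 * A * (norm x1 + C * G + 2 * A * H)"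
proof -
  define W where "W = norm x1 + C * G + 2 * A * H"
  have H: "0 \<le> H" using h_le[OF t] by (meson norm_ge_zero order_trans)
  have w_le: "norm (w s) \<le> W" if s: "s \<in> {-A..A}" for s
  proof -
    have "norm (w s - x1) \<le> C * G + H * \<bar>s + 1\<bar>"
      using s \<open>1 \<le> A\<close> by (intro ivp_sol_UNIV_velocity_le[OF sol] h_le) auto
    also have "H * \<bar>s + 1\<bar> \<le> H * (2 * A)"
      using s \<open>1 \<le> A\<close> H by (intro mult_left_mono) auto
    finally show ?thesis
      using norm_triangle_ineq2[of "w s" x1] unfolding W_def by (simp add: mult_ac)
  qed
  then show "norm (w t) \<le> norm x1 + C * G + 2 * A * H" using t unfolding W_def by simp
  have "norm (y t - y (-1)) \<le> W * \<bar>t - -1\<bar>"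
  proof (rule norm_diff_le_of_vector_derivative_bound)
    show "(y has_vector_derivative w q) (at q)" for q using sol by (simp add: ivp_sol_def)
    show "norm (w q) \<le> W" if "q \<in> {min (-1) t..max (-1) t}" for q
      using that t \<open>1 \<le> A\<close> by (intro w_le) auto
  qed
  also have "\<dots> \<le> W * (2 * A)"
    using t \<open>1 \<le> A\<close> w_le[OF t] by (intro mult_left_mono) (auto intro: order_trans[OF norm_ge_zero])
  finally show "norm (y t) \<le> norm x0 + 2 * A * W"
    using sol norm_triangle_ineq2[of "y t" x0] unfolding ivp_sol_def by (simp add: mult_ac)
qed

end

end

lemma pulse_ivp_family_bounded_on_compact:
  assumes "compact K" and h: "continuous_on UNIV h"
    and family: "\<And>\<epsilon>. \<epsilon> \<in> E \<Longrightarrow> pulse_ivp (\<rho> \<epsilon>) \<epsilon> C g h x0 x1 R G L (T \<epsilon>) \<and> \<epsilon> < T \<epsilon>"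
  shows "\<exists>B. \<forall>\<epsilon>\<in>E. \<forall>x v. ivp_sol g (\<rho> \<epsilon>) h x0 x1 UNIV x v \<longrightarrow> (\<forall>t\<in>K. norm (x t) \<le> B \<and> norm (v t) \<le> B)"
proof -
  obtain a where a: "\<And>t. t \<in> K \<Longrightarrow> norm t \<le> a"
    using compact_imp_bounded[OF \<open>compact K\<close>] unfolding bounded_iff by blast
  define A where "A = max 1 a"
  have "1 \<le> A" unfolding A_def by simp
  have K: "K \<subseteq> {-A..A}"
  proof
    fix t assume "t \<in> K"
    then show "t \<in> {-A..A}" using a[of t] unfolding A_def by auto
  qed
  obtain H where H: "\<And>t. t \<in> {-A..A} \<Longrightarrow> norm (h t) \<le> H"
    using compact_imp_bounded[OF compact_continuous_image[OF continuous_on_subset[OF h] compact_Icc]]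
    unfolding bounded_iff by blast
  define W where "W = norm x1 + C * G + 2 * A * H"
  show ?thesis
  proof (intro exI[of _ "max W (norm x0 + 2 * A * W)"] ballI allI impI)
    fix \<epsilon> x v t assume "\<epsilon> \<in> E" and sol: "ivp_sol g (\<rho> \<epsilon>) h x0 x1 UNIV x v" and "t \<in> K"
    then have t: "t \<in> {-A..A}" and inst: "pulse_ivp (\<rho> \<epsilon>) \<epsilon> C g h x0 x1 R G L (T \<epsilon>)" "\<epsilon> < T \<epsilon>"
      using K family by auto
    have "norm (v t) \<le> W" "norm (x t) \<le> norm x0 + 2 * A * W"
      using pulse_ivp.ivp_sol_UNIV_bounded[OF inst sol \<open>1 \<le> A\<close> H t] unfolding W_def by simp_all
    then show "norm (x t) \<le> max W (norm x0 + 2 * A * W) \<and> norm (v t) \<le> max W (norm x0 + 2 * A * W)"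
      unfolding le_max_iff_disj by blast
  qed
qed

section \<open>Choice of the horizon\<close>

lemma alpha_const_pos: "0 < b \<Longrightarrow> 0 < alpha_const b C G v L"
  unfolding alpha_const_def by (auto simp: mult.commute)

lemma alpha_const_le_one: "alpha_const b C G v L \<le> 1"
  unfolding alpha_const_def by simp

lemma alpha_const_contraction:
  assumes "0 \<le> C" and "0 \<le> L"
  shows "alpha_const b C G v L * (C * L) \<le> 1 / 2"
proof (cases "L * C > 0")
  case True
  then have "alpha_const b C G v L \<le> 1 / (2 * L * C)" unfolding alpha_const_def by auto
  moreover have "0 < 2 * L * C" using True by (simp add: mult.assoc)
  ultimately have "alpha_const b C G v L * (2 * L * C) \<le> 1" by (simp add: pos_le_divide_eq)
  then show ?thesis by (simp add: mult_ac)
next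
  case False
  moreover have "0 \<le> C * L" using assms by simp
  ultimately have "C * L = 0" by (simp add: mult.commute)
  then show ?thesis by (simp only: mult_zero_right)
qed

lemma alpha_const_a_priori:
  assumes "0 < b" "0 \<le> C" "0 \<le> G" "0 \<le> v" "0 < \<epsilon>" and t: "t < alpha_const b C G v L - \<epsilon>"
  shows "v * (t + 1) + M + max 0 (t + \<epsilon>) * (C * G) < b + v + M"
proof (cases "C * G + v > 0")
  case True
  define m where "m = max 0 (t + \<epsilon>)"
  have "m < alpha_const b C G v L" using t alpha_const_pos[OF \<open>0 < b\<close>] unfolding m_def by auto
  moreover have "alpha_const b C G v L \<le> b / (C * G + v)" using True unfolding alpha_const_def by auto
  ultimately have "m < b / (C * G + v)" by linarith
  then have "m * (C * G + v) < b" using True by (simp add: pos_less_divide_eq)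
  moreover have "v * t \<le> v * m" using \<open>0 \<le> v\<close> \<open>0 < \<epsilon>\<close> unfolding m_def by (intro mult_left_mono) auto
  ultimately show ?thesis unfolding m_def by (simp add: algebra_simps)
next
  case False
  moreover have "0 \<le> C * G" using assms(2,3) by simp
  ultimately have "C * G = 0" "v = 0" using \<open>0 \<le> v\<close> by linarith+
  then show ?thesis using \<open>0 < b\<close> by (simp only: mult_zero_right mult_zero_left add_0)
qed

lemma pulse_ivp_alpha_const:
  fixes g :: "'a::euclidean_space \<Rightarrow> 'a"
  assumes "pulse r \<epsilon> C" and g: "continuous_on UNIV g" and h: "continuous_on UNIV h" and "0 < b"
    and lip: "L-lipschitz_on (cball x0 (b + norm x1 + double_integral (\<lambda>q. norm (h q)) 1)) g"
    and bound: "\<And>y. y \<in> cball x0 (b + norm x1 + double_integral (\<lambda>q. norm (h q)) 1) \<Longrightarrow> norm (g y) \<le> G"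
  shows "pulse_ivp r \<epsilon> C g h x0 x1 (b + norm x1 + double_integral (\<lambda>q. norm (h q)) 1) G L
    (alpha_const b C G (norm x1) L - \<epsilon>)"
proof -
  interpret pulse r \<epsilon> C by fact
  define M where "M = double_integral (\<lambda>q. norm (h q)) 1"
  have "double_integral (\<lambda>q. norm (h q)) (-1) \<le> M"
    unfolding M_def using h by (intro double_integral_subset_le) (auto intro: continuous_on_norm continuous_on_subset)
  then have "0 \<le> M" by (simp add: double_integral_def)
  then have G: "0 \<le> G" using bound[of x0] \<open>0 < b\<close> unfolding M_def[symmetric] by (auto intro: order_trans[OF norm_ge_zero])
  have L: "0 \<le> L" using lip by (rule lipschitz_on_nonneg)
  show ?thesis
  proof (unfold_locales, fold M_def)
    show "0 < alpha_const b C G (norm x1) L - \<epsilon> + \<epsilon>" using alpha_const_pos[OF \<open>0 < b\<close>] by simp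
    show "alpha_const b C G (norm x1) L - \<epsilon> \<le> 1" using alpha_const_le_one[of b C G "norm x1" L] width by linarith
    show "(alpha_const b C G (norm x1) L - \<epsilon> + \<epsilon>) * (C * L) < 1"
      using alpha_const_contraction[OF mass_nonneg L, where b=b and G=G and v="norm x1"] by simp
    show "norm x1 * (t + 1) + M + max 0 (t + \<epsilon>) * (C * G) < b + norm x1 + M"
      if "t \<in> {-1..<alpha_const b C G (norm x1) L - \<epsilon>}" for t
      using alpha_const_a_priori[OF \<open>0 < b\<close> mass_nonneg G norm_ge_zero] width that by auto
  qed (use g h lip bound in \<open>simp_all add: M_def\<close>)
qed

theorem lemma3p2:
  fixes g :: "real^'n \<Rightarrow> real^'n" and h :: "real \<Rightarrow> real^'n"
    and \<rho> :: "real \<Rightarrow> real \<Rightarrow> real"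
    and \<eta> C b L :: real and x0 x1 :: "real^'n"
  assumes g_smooth: "smooth_fun g" and h_smooth: "smooth_fun h"
    and \<rho>_smooth: "\<And>\<epsilon>. \<epsilon> \<in> {0<..<1} \<Longrightarrow> smooth_fun (\<rho> \<epsilon>)"
    and \<rho>_supp: "\<And>\<epsilon>. \<epsilon> \<in> {0<..<1} \<Longrightarrow> closure {t. \<rho> \<epsilon> t \<noteq> 0} \<subseteq> {-\<epsilon>..\<epsilon>}"
    and \<eta>_pos: "0 < \<eta>" and \<eta>_le: "\<eta> \<le> 1" and C_nonneg: "0 \<le> C"
    and \<rho>_L1: "\<And>\<epsilon>. \<epsilon> \<in> {0<..<\<eta>} \<Longrightarrow> integral UNIV (\<lambda>t. \<bar>\<rho> \<epsilon> t\<bar>) \<le> C"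
    and b_pos: "0 < b"
    and L_lip: "L-lipschitz_on
       (cball x0 (b + norm x1 + integral {-1..1} (\<lambda>s. integral {-1..s} (\<lambda>r. norm (h r))))) g"
  shows
   "(let M = integral {-1..1} (\<lambda>s. integral {-1..s} (\<lambda>r. norm (h r)));
         I = cball x0 (b + norm x1 + M);
         G = Sup ((\<lambda>y. norm (g y)) ` I);
         \<alpha> = alpha_const b C G (norm x1) L
     in (\<forall>\<epsilon>\<in>{0<..<\<eta>}.
           (\<exists>x v. ivp_sol g (\<rho> \<epsilon>) h x0 x1 {-1..\<alpha> - \<epsilon>} x v) \<and>
           (\<forall>x v y w. ivp_sol g (\<rho> \<epsilon>) h x0 x1 {-1..\<alpha> - \<epsilon>} x v \<and>
                      ivp_sol g (\<rho> \<epsilon>) h x0 x1 {-1..\<alpha> - \<epsilon>} y w \<longrightarrow>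
                      (\<forall>t\<in>{-1..\<alpha> - \<epsilon>}. x t = y t \<and> v t = w t))))
    \<and> (\<exists>\<epsilon>0>0. \<epsilon>0 \<le> \<eta> \<and>
         (\<forall>\<epsilon>\<in>{0<..<\<epsilon>0}.
            (\<exists>x v. ivp_sol g (\<rho> \<epsilon>) h x0 x1 UNIV x v) \<and>
            (\<forall>x v y w. ivp_sol g (\<rho> \<epsilon>) h x0 x1 UNIV x v \<and> ivp_sol g (\<rho> \<epsilon>) h x0 x1 UNIV y w
                       \<longrightarrow> x = y \<and> v = w)) \<and>
         (\<forall>K. compact K \<longrightarrow> (\<exists>B. \<forall>\<epsilon>\<in>{0<..<\<epsilon>0}. \<forall>x v.
             ivp_sol g (\<rho> \<epsilon>) h x0 x1 UNIV x v \<longrightarrow> (\<forall>t\<in>K. norm (x t) \<le> B \<and> norm (v t) \<le> B))))"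
proof -
  define R where "R = b + norm x1 + double_integral (\<lambda>r. norm (h r)) 1"
  define G where "G = Sup ((\<lambda>y. norm (g y)) ` cball x0 R)"
  define \<alpha> where "\<alpha> = alpha_const b C G (norm x1) L"
  have g: "continuous_on UNIV g" and h: "continuous_on UNIV h"
    using g_smooth h_smooth by (auto intro: smooth_fun_imp_continuous)
  have G_bound: "\<And>y. y \<in> cball x0 R \<Longrightarrow> norm (g y) \<le> G"
    unfolding G_def using continuous_on_subset[OF g] by (rule norm_le_Sup_norm_image) auto
  have inst: "pulse_ivp (\<rho> \<epsilon>) \<epsilon> C g h x0 x1 R G L (\<alpha> - \<epsilon>)" if "\<epsilon> \<in> {0<..<\<eta>}" for \<epsilon>
    unfolding R_def \<alpha>_def using that \<eta>_le L_lip G_bound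
    by (intro pulse_ivp_alpha_const pulse_if_supported \<rho>_smooth \<rho>_supp \<rho>_L1 g h b_pos)
      (auto simp: R_def double_integral_def)
  define \<epsilon>0 where "\<epsilon>0 = min \<eta> (\<alpha> / 2)"
  have "0 < \<epsilon>0" "\<epsilon>0 \<le> \<eta>" using \<eta>_pos alpha_const_pos[OF b_pos] unfolding \<epsilon>0_def \<alpha>_def by auto
  moreover have wide: "pulse_ivp (\<rho> \<epsilon>) \<epsilon> C g h x0 x1 R G L (\<alpha> - \<epsilon>) \<and> \<epsilon> < \<alpha> - \<epsilon>" if "\<epsilon> \<in> {0<..<\<epsilon>0}" for \<epsilon>
    using inst that unfolding \<epsilon>0_def by auto
  have "\<forall>\<epsilon>\<in>{0<..<\<eta>}. (\<exists>x v. ivp_sol g (\<rho> \<epsilon>) h x0 x1 {-1..\<alpha> - \<epsilon>} x v) \<and>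
      (\<forall>x v y w. ivp_sol g (\<rho> \<epsilon>) h x0 x1 {-1..\<alpha> - \<epsilon>} x v \<and> ivp_sol g (\<rho> \<epsilon>) h x0 x1 {-1..\<alpha> - \<epsilon>} y w
        \<longrightarrow> (\<forall>t\<in>{-1..\<alpha> - \<epsilon>}. x t = y t \<and> v t = w t))"
    using pulse_ivp.ivp_sol_exists[OF inst] pulse_ivp.ivp_sol_unique[OF inst] by blast
  moreover have "\<forall>\<epsilon>\<in>{0<..<\<epsilon>0}. (\<exists>x v. ivp_sol g (\<rho> \<epsilon>) h x0 x1 UNIV x v) \<and>
      (\<forall>x v y w. ivp_sol g (\<rho> \<epsilon>) h x0 x1 UNIV x v \<and> ivp_sol g (\<rho> \<epsilon>) h x0 x1 UNIV y w \<longrightarrow> x = y \<and> v = w)"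
    using pulse_ivp.ivp_sol_UNIV_exists[OF conjunct1[OF wide] conjunct2[OF wide]]
      pulse_ivp.ivp_sol_UNIV_unique[OF conjunct1[OF wide] conjunct2[OF wide]] by blast
  moreover note pulse_ivp_family_bounded_on_compact[OF _ h wide]
  ultimately show ?thesis
    unfolding Let_def double_integral_def[symmetric] R_def[symmetric] G_def[symmetric] \<alpha>_def[symmetric]
    by blast
qed

end
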